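(* Let $\vec d=(\vec a,\vec b)$ be a bidegree sequence of length $n$ with $\sum_{i=1}^n a_i=\sum_{i=1}^n b_i=n\bar c$. Suppose $M_a,M_b\in\mathbb{N}$ satisfy $\max_i a_i\le M_a$, $\max_i b_i\le M_b$ and $(M_a+1)M_b\le n\bar c$. Then $\vec d$ is graphic. In particular, if $\max\vec d\le\sqrt{\tfrac14+n\bar c}-\tfrac12$, then $\vec d$ is graphic.
   Context: A bidegree sequence of length $n$ is a pair $\vec d=(\vec a,\vec b)$ with $\vec a=(a_1,\dots,a_n)\in\mathbb{N}_0^n$ and $\vec b=(b_1,\dots,b_n)\in\mathbb{N}_0^n$. It is graphic with loops if there is an $n\times n$ matrix with entries in $\{0,1\}$ whose $i$th row sum is $a_i$ and whose $i$th column sum is $b_i$ for every $i\in[1..n]$; it is graphic if such a matrix exists with all diagonal entries equal to $0$. $\max\vec d$ and $\min\vec d$ denote the maximum and minimum over all $2n$ entries $a_1,\dots,a_n,b_1,\dots,b_n$. The number $\bar c$ (the average degree) is defined by $\sum_i a_i=\sum_i b_i=n\bar c$. *)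

theory Defs
  imports Complex_Main
begin

text \<open>A bidegree sequence of length n is a pair of functions a b :: nat \<Rightarrow> nat,
  read on the index set {..<n} (i.e. indices 0..n-1 instead of 1..n).\<close>

definition graphic :: "nat \<Rightarrow> (nat \<Rightarrow> nat) \<Rightarrow> (nat \<Rightarrow> nat) \<Rightarrow> bool" where
  "graphic n a b \<longleftrightarrow> (\<exists>M :: nat \<Rightarrow> nat \<Rightarrow> nat.
     (\<forall>i<n. \<forall>j<n. M i j \<in> {0, 1}) \<and>
     (\<forall>i<n. M i i = 0) \<and>
     (\<forall>i<n. (\<Sum>j<n. M i j) = a i) \<and>
     (\<forall>j<n. (\<Sum>i<n. M i j) = b j))"

definition max_bideg :: "nat \<Rightarrow> (nat \<Rightarrow> nat) \<Rightarrow> (nat \<Rightarrow> nat) \<Rightarrow> nat" where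
  "max_bideg n a b = Max (a ` {..<n} \<union> b ` {..<n})"

end

(*
  Take a sub-realization (a loopless 0-1 matrix with row sums at most a and column sums at
  most b) with the maximum number of ones. If some row is still deficient, let X be the rows
  reachable from it by alternating paths and Y the columns such paths can enter. Maximality
  makes every column of Y full, every row of X full outside Y, and puts all ones of the columns
  of Y into rows of X. Counting the ones in the rows of X, with x = |X| and y the number of
  columns outside Y, yields sum b < (Ma + 1) Mb: this is immediate if x > Mb or y > Ma, and
  otherwise follows from (Ma - y)(Mb - x) >= 0. So all rows, and then by the equality of the
  sums all columns, are saturated. The square-root bound is the case Ma = Mb = max d.
*)
theory Submission
  imports Defs
begin

definition row_sum :: "nat \<Rightarrow> (nat \<Rightarrow> nat \<Rightarrow> nat) \<Rightarrow> nat \<Rightarrow> nat" where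
  "row_sum n M i = (\<Sum>j<n. M i j)"

definition col_sum :: "nat \<Rightarrow> (nat \<Rightarrow> nat \<Rightarrow> nat) \<Rightarrow> nat \<Rightarrow> nat" where
  "col_sum n M j = (\<Sum>i<n. M i j)"

definition arcs :: "nat \<Rightarrow> (nat \<Rightarrow> nat \<Rightarrow> nat) \<Rightarrow> nat" where
  "arcs n M = (\<Sum>j<n. col_sum n M j)"

definition loopless_01 :: "nat \<Rightarrow> (nat \<Rightarrow> nat \<Rightarrow> nat) \<Rightarrow> bool" where
  "loopless_01 n M \<longleftrightarrow> (\<forall>i<n. \<forall>j<n. M i j \<le> 1) \<and> (\<forall>i<n. M i i = 0)"

definition sub_realization ::
    "nat \<Rightarrow> (nat \<Rightarrow> nat) \<Rightarrow> (nat \<Rightarrow> nat) \<Rightarrow> (nat \<Rightarrow> nat \<Rightarrow> nat) \<Rightarrow> bool" where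
  "sub_realization n a b M \<longleftrightarrow>
     loopless_01 n M \<and> (\<forall>i<n. row_sum n M i \<le> a i) \<and> (\<forall>j<n. col_sum n M j \<le> b j)"

lemma arcs_eq_sum_row_sum: "arcs n M = (\<Sum>i<n. row_sum n M i)"
  unfolding arcs_def row_sum_def col_sum_def by (rule sum.swap)

lemma row_sum_update_other [simp]: "i \<noteq> k \<Longrightarrow> row_sum n (M(k := r)) i = row_sum n M i"
  by (simp add: row_sum_def)

lemma row_sum_set_entry:
  "l < n \<Longrightarrow> row_sum n (M(k := (M k)(l := v))) k + M k l = row_sum n M k + v"
  by (simp add: row_sum_def sum.remove[of "{..<n}" l])

lemma col_sum_set_entry:
  assumes "k < n"
  shows "col_sum n (M(k := (M k)(l := v))) l + M k l = col_sum n M l + v"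
    and "j \<noteq> l \<Longrightarrow> col_sum n (M(k := (M k)(l := v))) j = col_sum n M j"
  using assms by (simp_all add: col_sum_def sum.remove[of "{..<n}" k])

lemma swap_shifts_deficiency:
  assumes M: "loopless_01 n M" "\<forall>i<n. row_sum n M i \<le> a i"
    and k: "k < n" "row_sum n M k < a k"
    and k': "k' < n" "k' \<noteq> k"
    and l: "l < n" "l \<noteq> k" "M k l = 0" "M k' l = 1"
  obtains N where "loopless_01 n N" "\<forall>i<n. row_sum n N i \<le> a i" "row_sum n N k' < a k'"
    "\<forall>j<n. col_sum n N j = col_sum n M j" "\<forall>i j. j \<noteq> l \<longrightarrow> N i j = M i j"
proof -
  let ?M1 = "M(k := (M k)(l := 1))"
  define N where "N = ?M1(k' := (M k')(l := 0))"
  have M1: "?M1 k' l = 1" using k' l by simp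
  have row_k: "row_sum n N k = row_sum n M k + 1"
    using row_sum_set_entry[OF \<open>l < n\<close>, where M=M and k=k and v=1] k' l
    unfolding N_def by simp
  have row_k': "row_sum n N k' + 1 = row_sum n M k'"
    using row_sum_set_entry[OF \<open>l < n\<close>, where M="?M1" and k=k' and v=0] M1 k'
    unfolding N_def by simp
  have row_other: "row_sum n N i = row_sum n M i" if "i \<noteq> k" "i \<noteq> k'" for i
    using that unfolding N_def by simp
  have "col_sum n N l = col_sum n M l"
    using col_sum_set_entry(1)[OF \<open>k < n\<close>, where M=M and l=l and v=1]
      col_sum_set_entry(1)[OF \<open>k' < n\<close>, where M="?M1" and l=l and v=0] M1 k' l
    unfolding N_def by simp
  moreover have agree: "\<forall>i j. j \<noteq> l \<longrightarrow> N i j = M i j" unfolding N_def by simp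
  ultimately have "\<forall>j<n. col_sum n N j = col_sum n M j"
    unfolding col_sum_def by (metis (no_types, lifting) sum.cong)
  moreover have "loopless_01 n N" using M l unfolding loopless_01_def N_def by auto
  moreover have "\<forall>i<n. row_sum n N i \<le> a i"
    using M(2) k row_k row_k' row_other by (metis Suc_eq_plus1 Suc_leI le_add1 le_trans)
  moreover have "row_sum n N k' < a k'" using M(2) k' row_k' by fastforce
  ultimately show thesis using that agree by blast
qed

inductive alt_path :: "nat \<Rightarrow> (nat \<Rightarrow> nat) \<Rightarrow> (nat \<Rightarrow> nat \<Rightarrow> nat) \<Rightarrow> nat \<Rightarrow> nat set \<Rightarrow> bool"
  for n a M where
  start: "k < n \<Longrightarrow> row_sum n M k < a k \<Longrightarrow> alt_path n a M k {}"
| extend: "alt_path n a M k Z \<Longrightarrow> l < n \<Longrightarrow> l \<notin> Z \<Longrightarrow> l \<noteq> k \<Longrightarrow> M k l = 0 \<Longrightarrow>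
    k' < n \<Longrightarrow> M k' l = 1 \<Longrightarrow> alt_path n a M k' (insert l Z)"

lemma alt_path_row_less: "alt_path n a M k Z \<Longrightarrow> k < n"
  by (induction rule: alt_path.induct) auto

lemma alt_path_visited_column:
  "alt_path n a M k Z \<Longrightarrow> l \<in> Z \<Longrightarrow>
    \<exists>k' Z'. alt_path n a M k' Z' \<and> l < n \<and> l \<notin> Z' \<and> l \<noteq> k' \<and> M k' l = 0"
  by (induction rule: alt_path.induct) auto

lemma alt_path_shift_deficiency:
  assumes "alt_path n a M k Z" "loopless_01 n M" "\<forall>i<n. row_sum n M i \<le> a i"
  shows "\<exists>M'. loopless_01 n M' \<and> (\<forall>i<n. row_sum n M' i \<le> a i) \<and> row_sum n M' k < a k \<and>
    (\<forall>j<n. col_sum n M' j = col_sum n M j) \<and> (\<forall>i j. j \<notin> Z \<longrightarrow> M' i j = M i j)"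
  using assms
proof (induction rule: alt_path.induct)
  case (start k)
  then show ?case by blast
next
  case (extend k Z l k')
  then obtain M' where M': "loopless_01 n M'" "\<forall>i<n. row_sum n M' i \<le> a i" "row_sum n M' k < a k"
    and cols: "\<forall>j<n. col_sum n M' j = col_sum n M j" and agree: "\<forall>i j. j \<notin> Z \<longrightarrow> M' i j = M i j"
    by blast
  have "k < n" using extend.hyps(1) by (rule alt_path_row_less)
  moreover have "M' k l = 0" "M' k' l = 1" using agree extend.hyps by auto
  moreover have "k' \<noteq> k" using extend.hyps by auto
  ultimately obtain N where "loopless_01 n N" "\<forall>i<n. row_sum n N i \<le> a i" "row_sum n N k' < a k'"
    "\<forall>j<n. col_sum n N j = col_sum n M' j" "\<forall>i j. j \<noteq> l \<longrightarrow> N i j = M' i j"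
    using swap_shifts_deficiency[of n M' a k k' l] M' extend.hyps by blast
  then show ?case using cols agree by auto
qed

lemma sum_row_sum_cut:
  assumes M: "loopless_01 n M" and X: "X \<subseteq> {..<n}" and Y: "Y \<subseteq> {..<n}"
    and ones_in_X: "\<And>k l. l \<in> Y \<Longrightarrow> k < n \<Longrightarrow> M k l = 1 \<Longrightarrow> k \<in> X"
    and ones_off_Y: "\<And>k l. k \<in> X \<Longrightarrow> l < n \<Longrightarrow> l \<notin> Y \<Longrightarrow> l \<noteq> k \<Longrightarrow> M k l = 1"
  shows "(\<Sum>k\<in>X. row_sum n M k) + card (X \<inter> ({..<n} - Y))
    = (\<Sum>l\<in>Y. col_sum n M l) + card X * card ({..<n} - Y)"
proof -
  define Yc where "Yc = {..<n} - Y"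
  have finX: "finite X" using X finite_subset by blast
  have row_split: "row_sum n M k = (\<Sum>l\<in>Y. M k l) + (\<Sum>l\<in>Yc. M k l)" for k
    unfolding row_sum_def Yc_def using Y sum.subset_diff[of Y "{..<n}" "M k"] by simp
  have col_Y: "(\<Sum>k\<in>X. M k l) = col_sum n M l" if "l \<in> Y" for l
    unfolding col_sum_def
  proof (rule sum.mono_neutral_left)
    show "\<forall>i\<in>{..<n} - X. M i l = 0"
      using M ones_in_X that Y unfolding loopless_01_def by (fastforce simp: le_Suc_eq)
  qed (use X in auto)
  have row_Yc: "(\<Sum>l\<in>Yc. M k l) + (if k \<in> Yc then 1 else 0) = card Yc" if "k \<in> X" for k
  proof -
    have "(\<Sum>l\<in>Yc. M k l) = (\<Sum>l\<in>Yc. if l = k then 0 else 1)"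
      using M ones_off_Y that X unfolding loopless_01_def Yc_def by (intro sum.cong) auto
    also have "\<dots> = card (Yc - {k})"
      by (simp add: sum.If_cases Diff_eq Yc_def)
    moreover have "card Yc > 0" if "k \<in> Yc"
      using that card_gt_0_iff unfolding Yc_def by blast
    ultimately show ?thesis by (simp add: card_Diff_singleton_if)
  qed
  have "(\<Sum>k\<in>X. row_sum n M k) + card (X \<inter> Yc)
      = (\<Sum>k\<in>X. \<Sum>l\<in>Y. M k l) + (\<Sum>k\<in>X. (\<Sum>l\<in>Yc. M k l) + (if k \<in> Yc then 1 else 0))"
    using finX by (simp add: row_split sum.distrib sum.If_cases Int_commute)
  also have "\<dots> = (\<Sum>l\<in>Y. col_sum n M l) + card X * card Yc"
    using col_Y row_Yc by (simp add: sum.swap[where A=X and B=Y])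
  finally show ?thesis unfolding Yc_def .
qed

lemma cut_total_bound:
  fixes x y z R A BY BC Ma Mb :: nat
  assumes "R < A" "R + z = BY + x * y" "z \<le> x" "z \<le> y"
    and "A \<le> x * Ma" "A \<le> BY + BC" "BC \<le> y * Mb"
  shows "BY + BC < (Ma + 1) * Mb"
proof -
  consider "Mb + 1 \<le> x" | "Ma + 1 \<le> y" | "x \<le> Mb" "y \<le> Ma" by linarith
  then show ?thesis
  proof cases
    case 1
    then have "y * Mb + y \<le> x * y" using mult_le_mono2[OF 1, of y] by (simp add: algebra_simps)
    then show ?thesis using assms by linarith
  next
    case 2
    then have "x * Ma + x \<le> x * y" using mult_le_mono2[OF 2, of x] by (simp add: algebra_simps)
    then show ?thesis using assms by linarith
  next
    case 3
    have "int x * int Ma + int y * int Mb \<le> int Ma * int Mb + int x * int y"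
      using mult_nonneg_nonneg[of "int Ma - int y" "int Mb - int x"] 3 by (simp add: algebra_simps)
    then have "x * Ma + y * Mb \<le> Ma * Mb + x * y"
      by (metis of_nat_add of_nat_le_iff of_nat_mult)
    then show ?thesis using assms 3 by (simp add: algebra_simps)
  qed
qed

locale maximal_sub_realization =
  fixes n :: nat and a b :: "nat \<Rightarrow> nat" and M :: "nat \<Rightarrow> nat \<Rightarrow> nat"
  assumes sub_realization: "sub_realization n a b M"
    and maximal: "\<And>N. sub_realization n a b N \<Longrightarrow> arcs n N \<le> arcs n M"
begin

lemma loopless: "loopless_01 n M"
  and row_sum_le: "\<forall>i<n. row_sum n M i \<le> a i"
  and col_sum_le: "\<forall>j<n. col_sum n M j \<le> b j"
  using sub_realization unfolding sub_realization_def by auto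

text \<open>Otherwise, after shifting the deficiency to row \<open>k\<close>, the entry \<open>(k, l)\<close> could be set to \<open>1\<close>.\<close>

lemma alt_path_column_full:
  assumes path: "alt_path n a M k Z" and l: "l < n" "l \<notin> Z" "l \<noteq> k" "M k l = 0"
  shows "col_sum n M l = b l"
proof (rule ccontr)
  assume not_full: "col_sum n M l \<noteq> b l"
  obtain M' where M': "loopless_01 n M'" "\<forall>i<n. row_sum n M' i \<le> a i" "row_sum n M' k < a k"
    and cols: "\<forall>j<n. col_sum n M' j = col_sum n M j" and agree: "\<forall>i j. j \<notin> Z \<longrightarrow> M' i j = M i j"
    using alt_path_shift_deficiency[OF path loopless row_sum_le] by blast
  have k: "k < n" using path by (rule alt_path_row_less)
  have M'kl: "M' k l = 0" using agree l by simp
  define N where "N = M'(k := (M' k)(l := 1))"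
  have row_N: "row_sum n N i \<le> a i" if "i < n" for i
    using row_sum_set_entry[OF \<open>l < n\<close>, where M=M' and k=k and v=1] M' M'kl that
    unfolding N_def by (cases "i = k") auto
  have col_N: "col_sum n N j = col_sum n M j + (if j = l then 1 else 0)" if "j < n" for j
    using col_sum_set_entry[OF k, where M=M' and l=l and v=1] M'kl cols that
    unfolding N_def by (cases "j = l") auto
  have "sub_realization n a b N"
    unfolding sub_realization_def
  proof (intro conjI allI impI)
    show "loopless_01 n N" using M' l unfolding loopless_01_def N_def by auto
    show "row_sum n N i \<le> a i" if "i < n" for i using row_N that .
    show "col_sum n N j \<le> b j" if "j < n" for j
      using col_N col_sum_le not_full that by (simp add: order_less_le Suc_le_eq)
  qed
  moreover have "arcs n N = arcs n M + 1"
    using col_N l unfolding arcs_def by (simp add: sum.distrib)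
  ultimately show False using maximal by fastforce
qed

lemma row_sum_eq:
  assumes sums: "(\<Sum>i<n. a i) = (\<Sum>i<n. b i)"
    and Ma: "\<forall>i<n. a i \<le> Ma" and Mb: "\<forall>i<n. b i \<le> Mb"
    and bound: "(Ma + 1) * Mb \<le> (\<Sum>i<n. a i)"
  shows "\<forall>i<n. row_sum n M i = a i"
proof (rule ccontr)
  assume "\<not> (\<forall>i<n. row_sum n M i = a i)"
  then obtain i0 where i0: "i0 < n" "row_sum n M i0 < a i0"
    using row_sum_le le_neq_implies_less by blast
  define X where "X = {k. \<exists>Z. alt_path n a M k Z}"
  define Y where "Y = {l. \<exists>k Z. alt_path n a M k Z \<and> l < n \<and> l \<notin> Z \<and> l \<noteq> k \<and> M k l = 0}"
  define Yc where "Yc = {..<n} - Y"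
  have X: "X \<subseteq> {..<n}" unfolding X_def using alt_path_row_less by blast
  have Y: "Y \<subseteq> {..<n}" unfolding Y_def by blast
  have finX: "finite X" using X finite_subset by blast
  have "i0 \<in> X" unfolding X_def using alt_path.start[of i0 n M a] i0 by blast
  have ones_in_X: "k \<in> X" if "l \<in> Y" "k < n" "M k l = 1" for k l
    using that alt_path.extend unfolding X_def Y_def by blast
  have ones_off_Y: "M k l = 1" if "k \<in> X" "l < n" "l \<notin> Y" "l \<noteq> k" for k l
  proof -
    obtain Z where path: "alt_path n a M k Z" using \<open>k \<in> X\<close> unfolding X_def by blast
    then have "l \<notin> Z" using alt_path_visited_column \<open>l \<notin> Y\<close> unfolding Y_def by blast
    then have "M k l \<noteq> 0" using path that unfolding Y_def by auto
    moreover have "M k l \<le> 1" using loopless that X unfolding loopless_01_def by blast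
    ultimately show ?thesis by simp
  qed
  have "(\<Sum>l\<in>Y. col_sum n M l) = (\<Sum>l\<in>Y. b l)"
    using alt_path_column_full unfolding Y_def by (intro sum.cong) auto
  then have cut: "(\<Sum>k\<in>X. row_sum n M k) + card (X \<inter> Yc) = (\<Sum>l\<in>Y. b l) + card X * card Yc"
    using sum_row_sum_cut[OF loopless X Y ones_in_X ones_off_Y] unfolding Yc_def by simp
  have deficit: "(\<Sum>k\<in>X. row_sum n M k) < (\<Sum>k\<in>X. a k)"
    using finX \<open>i0 \<in> X\<close> i0 row_sum_le X by (intro sum_strict_mono_ex1) auto
  have "(\<Sum>i<n. b i) = (\<Sum>l\<in>Y. b l) + (\<Sum>l\<in>Yc. b l)"
    unfolding Yc_def using Y sum.subset_diff[of Y "{..<n}" b] by simp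
  moreover have "(\<Sum>k\<in>X. a k) \<le> card X * Ma" using Ma X sum_bounded_above[of X a Ma] by auto
  moreover have "(\<Sum>l\<in>Yc. b l) \<le> card Yc * Mb"
    using Mb sum_bounded_above[of Yc b Mb] unfolding Yc_def by auto
  moreover have "(\<Sum>k\<in>X. a k) \<le> (\<Sum>i<n. a i)" using X by (simp add: sum_mono2)
  moreover have "card (X \<inter> Yc) \<le> card X" "card (X \<inter> Yc) \<le> card Yc"
    using finX by (simp_all add: card_mono Yc_def)
  ultimately have "(\<Sum>i<n. b i) < (Ma + 1) * Mb"
    using cut_total_bound[OF deficit cut] sums by (simp add: mult.commute)
  then show False using bound sums by simp
qed

lemma graphic:
  assumes sums: "(\<Sum>i<n. a i) = (\<Sum>i<n. b i)"
    and "\<forall>i<n. a i \<le> Ma" "\<forall>i<n. b i \<le> Mb" "(Ma + 1) * Mb \<le> (\<Sum>i<n. a i)"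
  shows "graphic n a b"
proof -
  have rows: "\<forall>i<n. row_sum n M i = a i" using row_sum_eq assms by blast
  then have "(\<Sum>j<n. col_sum n M j) = (\<Sum>j<n. b j)"
    using arcs_eq_sum_row_sum[of n M] sums unfolding arcs_def by simp
  then have cols: "\<forall>j<n. col_sum n M j = b j"
    using sum_mono_inv col_sum_le by (metis finite_lessThan lessThan_iff)
  show ?thesis
    unfolding graphic_def using loopless rows cols
    by (intro exI[of _ M]) (auto simp: loopless_01_def row_sum_def col_sum_def le_Suc_eq)
qed

end

lemma graphic_if_degree_product_bound:
  assumes "(\<Sum>i<n. a i) = (\<Sum>i<n. b i)"
    and "\<forall>i<n. a i \<le> Ma" "\<forall>i<n. b i \<le> Mb" "(Ma + 1) * Mb \<le> (\<Sum>i<n. a i)"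
  shows "graphic n a b"
proof -
  have "sub_realization n a b (\<lambda>i j. 0)"
    by (simp add: sub_realization_def loopless_01_def row_sum_def col_sum_def)
  moreover have "arcs n N < (\<Sum>j<n. b j) + 1" if "sub_realization n a b N" for N
    using that unfolding arcs_def sub_realization_def by (auto simp: less_Suc_eq_le intro!: sum_mono)
  ultimately obtain M where "maximal_sub_realization n a b M"
    using ex_has_greatest_nat[of "sub_realization n a b" _ "arcs n"]
    unfolding maximal_sub_realization_def by blast
  then show ?thesis using assms by (rule maximal_sub_realization.graphic)
qed

lemma product_bound_if_sqrt_bound:
  fixes m :: nat and s :: real
  assumes "real m \<le> sqrt (1/4 + s) - 1/2"
  shows "real ((m + 1) * m) \<le> s"
proof -
  have le_sqrt: "real m + 1/2 \<le> sqrt (1/4 + s)" using assms by simp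
  then have "0 \<le> 1/4 + s" using real_sqrt_ge_0_iff[of "1/4 + s"] by linarith
  then have "(real m + 1/2)^2 \<le> 1/4 + s"
    using power_mono[OF le_sqrt, of 2] by simp
  then show ?thesis by (simp add: power2_eq_square algebra_simps)
qed

theorem theorem4:
  fixes n :: nat and a b :: "nat \<Rightarrow> nat" and cbar :: real
  assumes "real (\<Sum>i<n. a i) = real n * cbar"
    and "real (\<Sum>i<n. b i) = real n * cbar"
  shows "(\<forall>Ma Mb :: nat. (\<forall>i<n. a i \<le> Ma) \<and> (\<forall>i<n. b i \<le> Mb) \<and>
            real ((Ma + 1) * Mb) \<le> real n * cbar \<longrightarrow> graphic n a b)
       \<and> (real (max_bideg n a b) \<le> sqrt (1/4 + real n * cbar) - 1/2 \<longrightarrow> graphic n a b)"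
proof (intro conjI allI impI)
  have "real (\<Sum>i<n. a i) = real (\<Sum>i<n. b i)" using assms by simp
  then have sums: "(\<Sum>i<n. a i) = (\<Sum>i<n. b i)" by (simp only: of_nat_eq_iff)
  show bounded: "graphic n a b"
    if "(\<forall>i<n. a i \<le> Ma) \<and> (\<forall>i<n. b i \<le> Mb) \<and> real ((Ma + 1) * Mb) \<le> real n * cbar" for Ma Mb
  proof -
    have "real ((Ma + 1) * Mb) \<le> real (\<Sum>i<n. a i)" using that assms(1) by simp
    then have "(Ma + 1) * Mb \<le> (\<Sum>i<n. a i)" by (simp only: of_nat_le_iff)
    then show ?thesis using graphic_if_degree_product_bound[OF sums] that by blast
  qed
  show "graphic n a b" if "real (max_bideg n a b) \<le> sqrt (1/4 + real n * cbar) - 1/2"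
  proof -
    have "\<forall>i<n. a i \<le> max_bideg n a b \<and> b i \<le> max_bideg n a b"
      unfolding max_bideg_def by (auto intro: Max_ge)
    then show ?thesis using bounded product_bound_if_sqrt_bound[OF that] by blast
  qed
qed

end
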